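(* Let $r>1$. For a positive integer $x$, let $q_r(x,x)$ be the probability that the CA competition process with fitness ratio $r$ started at $(x,x)$ satisfies $X_t\ne Y_t$ for all $t\ge1$. Then \[ q_r(x,x)\to\frac{r-1}{r+1}\quad\text{as } x\to\infty. \]
   Context: The CA competition process with fitness ratio $r\ge 1$ started at $(x_0,y_0)$ is the discrete-time Markov chain $\{(X_t,Y_t)\}_{t\ge0}$ on $\{(x,y)\in\mathbb{Z}^2: x\ge1,y\ge1\}$ with $(X_0,Y_0)=(x_0,y_0)$ and transition probabilities: from $(x,y)$ it moves to $(x+1,y)$ with probability $\frac{rx}{rx+y}$ and to $(x,y+1)$ with probability $\frac{y}{rx+y}$. *)

theory Defs
  imports Complex_Main
begin

definition ca_px :: "real \<Rightarrow> nat \<Rightarrow> nat \<Rightarrow> real" where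
  "ca_px r x y = r * real x / (r * real x + real y)"

definition ca_py :: "real \<Rightarrow> nat \<Rightarrow> nat \<Rightarrow> real" where
  "ca_py r x y = real y / (r * real x + real y)"

text \<open>ca_avoid r n x y = probability that the process started at (x,y) satisfies
  X_t \<noteq> Y_t for all 1 \<le> t \<le> n (first-step decomposition of the path probability).\<close>

fun ca_avoid :: "real \<Rightarrow> nat \<Rightarrow> nat \<Rightarrow> nat \<Rightarrow> real" where
  "ca_avoid r 0 x y = 1"
| "ca_avoid r (Suc n) x y =
     ca_px r x y * (if Suc x = y then 0 else ca_avoid r n (Suc x) y)
   + ca_py r x y * (if Suc y = x then 0 else ca_avoid r n x (Suc y))"

text \<open>q_r(x,y) = probability that X_t \<noteq> Y_t for all t \<ge> 1: the limit (infimum) of the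
  non-increasing finite-horizon probabilities (continuity of measure from above).\<close>

definition ca_q :: "real \<Rightarrow> nat \<Rightarrow> nat \<Rightarrow> real" where
  "ca_q r x y = (INF n. ca_avoid r n x y)"

end

theory Submission
  imports Defs
begin

text \<open>From \<open>(x, x)\<close> the process first moves to \<open>(x + 1, x)\<close> with probability \<open>r / (r + 1)\<close>
  and to \<open>(x, x + 1)\<close> with probability \<open>1 / (r + 1)\<close>; afterwards \<open>X - Y\<close> is a nearest-neighbour
  walk stepping up with probability \<open>r X / (r X + Y)\<close>, and the process avoids the diagonal as long
  as this walk avoids \<open>0\<close>. Above the diagonal the up-probability is at least \<open>r / (r + 1)\<close>, so
  comparison with gambler's ruin shows that from distance \<open>d\<close> the diagonal is avoided with
  probability at least \<open>1 - r\<^sup>-\<^sup>d\<close>; this gives the lower bound \<open>(r - 1) / (r + 1)\<close>.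
  Conversely, within distance \<open>K\<close> of the diagonal and beyond \<open>x\<close> the ratio \<open>Y / X\<close> is at least
  \<open>1 - K / (x + 1)\<close>, so there the walk is nearly the one with ratio \<open>r\<close>; exchanging the
  coordinates (which replaces \<open>r\<close> by \<open>1 / r\<close>) treats the region below the diagonal. Avoiding the
  diagonal forever requires leaving the strip of width \<open>K\<close> through its far side, whose
  probability is bounded by gambler's ruin. Letting \<open>x \<rightarrow> \<infinity>\<close> and then \<open>K \<rightarrow> \<infinity>\<close> gives the
  matching upper bound.\<close>

lemma ca_px_nonneg: "0 < r \<Longrightarrow> 0 \<le> ca_px r x y"
  by (simp add: ca_px_def)

lemma ca_py_nonneg: "0 < r \<Longrightarrow> 0 \<le> ca_py r x y"
  by (simp add: ca_py_def)

lemma ca_px_add_py_le_one: "0 < r \<Longrightarrow> ca_px r x y + ca_py r x y \<le> 1"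
  by (cases "r * real x + real y = 0") (auto simp: ca_px_def ca_py_def add_divide_distrib[symmetric])

lemma ca_px_le_one: assumes "0 < r" shows "ca_px r x y \<le> 1"
  using ca_px_add_py_le_one[OF assms, of x y] ca_py_nonneg[OF assms, of x y] by linarith

lemma ca_py_eq: assumes "0 < r" "0 < x" shows "ca_py r x y = 1 - ca_px r x y"
proof -
  have "0 < r * real x + real y" using assms by (simp add: add_pos_nonneg)
  then show ?thesis by (simp add: ca_px_def ca_py_def field_simps)
qed

lemma ca_px_diag: "0 < r \<Longrightarrow> 0 < x \<Longrightarrow> ca_px r x x = r / (r + 1)"
  unfolding ca_px_def by (simp add: distrib_right[of r 1, simplified, symmetric])

lemma ca_py_diag: "0 < r \<Longrightarrow> 0 < x \<Longrightarrow> ca_py r x x = 1 / (r + 1)"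
  unfolding ca_py_def by (simp add: distrib_right[of r 1, simplified, symmetric])

lemma ca_px_ge:
  assumes "0 < r" "Y \<le> X" "0 < X"
  shows "r / (r + 1) \<le> ca_px r X Y"
proof -
  have "0 < r * real X + real Y" using assms by (simp add: add_pos_nonneg)
  moreover have "r * (r * real X + real Y) \<le> r * real X * (r + 1)"
    using assms by (simp add: algebra_simps)
  ultimately show ?thesis
    using assms unfolding ca_px_def by (simp add: divide_le_eq le_divide_eq field_simps)
qed

lemma ca_px_le:
  assumes "0 < r" "0 < \<rho>" "r * \<rho> * real X \<le> real Y"
  shows "ca_px r X Y \<le> 1 / (1 + \<rho>)"
proof (cases "X = 0")
  case False
  then have "0 < r * real X + real Y" using assms by (simp add: add_pos_nonneg)
  moreover have "r * real X * (1 + \<rho>) \<le> r * real X + real Y"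
    using assms(3) by (simp add: algebra_simps)
  ultimately show ?thesis using assms(2) unfolding ca_px_def by (simp add: divide_le_eq field_simps)
qed (use assms in \<open>simp add: ca_px_def\<close>)

lemma ca_px_swap: assumes "0 < r" shows "ca_px r x y = ca_py (1 / r) y x"
proof -
  have "1 / r * real y + real x = (r * real x + real y) / r" using assms by (simp add: field_simps)
  then show ?thesis using assms by (simp add: ca_px_def ca_py_def)
qed

lemma ca_py_swap: assumes "0 < r" shows "ca_py r x y = ca_px (1 / r) y x"
proof -
  have "1 / r * real y + real x = (r * real x + real y) / r" using assms by (simp add: field_simps)
  then show ?thesis using assms by (simp add: ca_px_def ca_py_def divide_divide_eq_right)
qed

lemma ca_avoid_bounds:
  assumes "0 < r"
  shows "0 \<le> ca_avoid r n x y \<and> ca_avoid r n x y \<le> 1"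
proof (induction n arbitrary: x y)
  case (Suc n)
  define A where "A = (if Suc x = y then 0 else ca_avoid r n (Suc x) y)"
  define B where "B = (if Suc y = x then 0 else ca_avoid r n x (Suc y))"
  have "0 \<le> A" "A \<le> 1" "0 \<le> B" "B \<le> 1" using Suc by (auto simp: A_def B_def)
  moreover have "0 \<le> ca_px r x y" "0 \<le> ca_py r x y" "ca_px r x y + ca_py r x y \<le> 1"
    using assms ca_px_nonneg ca_py_nonneg ca_px_add_py_le_one by auto
  ultimately have "0 \<le> ca_px r x y * A + ca_py r x y * B \<and> ca_px r x y * A + ca_py r x y * B \<le> 1"
    by (smt (verit) mult_left_le mult_nonneg_nonneg)
  then show ?case by (simp add: A_def B_def)
qed simp

lemma ca_avoid_Suc_le: assumes "0 < r" shows "ca_avoid r (Suc n) x y \<le> ca_avoid r n x y"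
proof (induction n arbitrary: x y)
  case 0
  show ?case using ca_avoid_bounds[OF assms, of 1 x y] by simp
next
  case (Suc n)
  have "(if Suc x = y then 0 else ca_avoid r (Suc n) (Suc x) y) \<le> (if Suc x = y then 0 else ca_avoid r n (Suc x) y)"
    "(if Suc y = x then 0 else ca_avoid r (Suc n) x (Suc y)) \<le> (if Suc y = x then 0 else ca_avoid r n x (Suc y))"
    using Suc.IH by (simp_all del: ca_avoid.simps)
  then show ?case
    using ca_px_nonneg[OF assms, of x y] ca_py_nonneg[OF assms, of x y]
    by (simp only: ca_avoid.simps) (intro add_mono mult_left_mono)
qed

lemma ca_avoid_swap: assumes "0 < r" shows "ca_avoid r n x y = ca_avoid (1 / r) n y x"
  by (induction n arbitrary: x y)
    (use ca_px_swap[OF assms] ca_py_swap[OF assms] in \<open>simp_all add: add.commute\<close>)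

lemma ca_avoid_Suc_below_diag:
  assumes "0 < r" "Y < X"
  shows "ca_avoid r (Suc n) X Y = ca_px r X Y * ca_avoid r n (Suc X) Y
           + (1 - ca_px r X Y) * (if Suc Y = X then 0 else ca_avoid r n X (Suc Y))"
  using assms ca_py_eq[OF assms(1), of X Y] by simp

lemma ca_avoid_tendsto_ca_q:
  assumes "0 < r"
  shows "(\<lambda>n. ca_avoid r n x y) \<longlonglongrightarrow> ca_q r x y"
  unfolding ca_q_def
proof (rule LIMSEQ_decseq_INF)
  show "bdd_below (range (\<lambda>n. ca_avoid r n x y))"
    using ca_avoid_bounds[OF assms] by (intro bdd_belowI2[where m = 0]) blast
  show "decseq (\<lambda>n. ca_avoid r n x y)"
    by (intro decseq_SucI ca_avoid_Suc_le[OF assms])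
qed

lemma ca_q_ge: assumes "0 < r" "\<And>n. L \<le> ca_avoid r n x y" shows "L \<le> ca_q r x y"
  using assms(2) by (intro LIMSEQ_le_const[OF ca_avoid_tendsto_ca_q[OF assms(1)]]) blast

lemma ca_q_le_limit:
  assumes "0 < r" "\<And>n. ca_avoid r n x y \<le> G n" "G \<longlonglongrightarrow> L"
  shows "ca_q r x y \<le> L"
  using assms(2) by (intro LIMSEQ_le[OF ca_avoid_tendsto_ca_q[OF assms(1)] assms(3)]) blast

lemma ca_q_nonneg: assumes "0 < r" shows "0 \<le> ca_q r x y"
  using ca_avoid_bounds[OF assms] by (intro ca_q_ge[OF assms]) blast

lemma ca_q_swap: assumes "0 < r" shows "ca_q r x y = ca_q (1 / r) y x"
  by (simp only: ca_q_def ca_avoid_swap[OF assms])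

lemma ca_q_first_step:
  assumes "0 < r"
  shows "ca_q r x y = ca_px r x y * (if Suc x = y then 0 else ca_q r (Suc x) y)
                    + ca_py r x y * (if Suc y = x then 0 else ca_q r x (Suc y))"
proof (rule LIMSEQ_unique)
  show "(\<lambda>n. ca_avoid r (Suc n) x y) \<longlonglongrightarrow> ca_q r x y"
    using ca_avoid_tendsto_ca_q[OF assms] by (rule LIMSEQ_Suc)
  show "(\<lambda>n. ca_avoid r (Suc n) x y) \<longlonglongrightarrow> ca_px r x y * (if Suc x = y then 0 else ca_q r (Suc x) y)
                    + ca_py r x y * (if Suc y = x then 0 else ca_q r x (Suc y))"
    by (simp only: ca_avoid.simps) (auto intro!: tendsto_intros ca_avoid_tendsto_ca_q[OF assms])
qed

lemma ca_q_diag: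
  assumes "0 < r" "0 < x"
  shows "ca_q r x x = r / (r + 1) * ca_q r (Suc x) x + 1 / (r + 1) * ca_q r x (Suc x)"
  using ca_q_first_step[OF assms(1), of x x] by (simp add: ca_px_diag[OF assms] ca_py_diag[OF assms])

lemma ca_avoid_ge_subsolution:
  fixes g :: "nat \<Rightarrow> nat \<Rightarrow> nat \<Rightarrow> real"
  assumes r: "0 < r"
    and init: "\<And>X Y. Y < X \<Longrightarrow> g 0 X Y \<le> 1"
    and step: "\<And>n X Y. Y < X \<Longrightarrow> g (Suc n) X Y \<le>
      ca_px r X Y * g n (Suc X) Y + (1 - ca_px r X Y) * (if Suc Y = X then 0 else g n X (Suc Y))"
  shows "Y < X \<Longrightarrow> g n X Y \<le> ca_avoid r n X Y"
proof (induction n arbitrary: X Y)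
  case 0
  then show ?case using init by simp
next
  case (Suc n)
  have "g n (Suc X) Y \<le> ca_avoid r n (Suc X) Y"
    "(if Suc Y = X then 0 else g n X (Suc Y)) \<le> (if Suc Y = X then 0 else ca_avoid r n X (Suc Y))"
    using Suc by auto
  then have "ca_px r X Y * g n (Suc X) Y + (1 - ca_px r X Y) * (if Suc Y = X then 0 else g n X (Suc Y))
      \<le> ca_avoid r (Suc n) X Y"
    unfolding ca_avoid_Suc_below_diag[OF r Suc.prems]
    using ca_px_nonneg[OF r] ca_px_le_one[OF r] by (intro add_mono mult_left_mono) auto
  then show ?case using step[where n = n and X = X and Y = Y] Suc.prems by linarith
qed

lemma ca_avoid_le_supersolution:
  fixes g :: "nat \<Rightarrow> nat \<Rightarrow> nat \<Rightarrow> real" and lo :: nat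
  assumes r: "0 < r"
    and init: "\<And>X Y. lo \<le> X \<Longrightarrow> Y < X \<Longrightarrow> 1 \<le> g 0 X Y"
    and step: "\<And>n X Y. lo \<le> X \<Longrightarrow> Y < X \<Longrightarrow> 1 \<le> g (Suc n) X Y \<or>
      ca_px r X Y * g n (Suc X) Y + (1 - ca_px r X Y) * (if Suc Y = X then 0 else g n X (Suc Y))
        \<le> g (Suc n) X Y"
  shows "lo \<le> X \<Longrightarrow> Y < X \<Longrightarrow> ca_avoid r n X Y \<le> g n X Y"
proof (induction n arbitrary: X Y)
  case 0
  then show ?case using init by simp
next
  case (Suc n)
  have "ca_avoid r n (Suc X) Y \<le> g n (Suc X) Y"
    "(if Suc Y = X then 0 else ca_avoid r n X (Suc Y)) \<le> (if Suc Y = X then 0 else g n X (Suc Y))"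
    using Suc by auto
  then have "ca_avoid r (Suc n) X Y \<le>
      ca_px r X Y * g n (Suc X) Y + (1 - ca_px r X Y) * (if Suc Y = X then 0 else g n X (Suc Y))"
    unfolding ca_avoid_Suc_below_diag[OF r Suc.prems(2)]
    using ca_px_nonneg[OF r] ca_px_le_one[OF r] by (intro add_mono mult_left_mono) auto
  then show ?case
    using step[where n = n and X = X and Y = Y] Suc.prems ca_avoid_bounds[OF r, of "Suc n" X Y]
    by linarith
qed

lemma one_minus_power_step:
  fixes p \<rho> :: "'a::comm_ring_1"
  shows "p * (1 - \<rho> ^ (e + 2)) + (1 - p) * (1 - \<rho> ^ e)
    = (1 - \<rho> ^ (e + 1)) + \<rho> ^ e * (1 - \<rho>) * (p * (1 + \<rho>) - 1)"
  by (simp add: algebra_simps power_add power2_eq_square)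

lemma ca_q_above_diag_ge:
  assumes r: "1 < r" and "Y < X"
  shows "1 - (1 / r) ^ (X - Y) \<le> ca_q r X Y"
proof -
  define \<tau> where "\<tau> = 1 / r"
  have r0: "0 < r" using r by simp
  have \<tau>: "0 < \<tau>" "\<tau> < 1" using r by (auto simp: \<tau>_def)
  have "1 - \<tau> ^ (X - Y) \<le> ca_avoid r n X Y" for n
  proof (rule ca_avoid_ge_subsolution[where g = "\<lambda>_ X Y. 1 - \<tau> ^ (X - Y)", OF r0 _ _ \<open>Y < X\<close>])
    fix n X Y :: nat assume "Y < X"
    then obtain e where e: "X - Y = Suc e" "Suc X - Y = e + 2" "X - Suc Y = e"
      by (metis Suc_diff_Suc Suc_diff_le add_2_eq_Suc' diff_Suc_Suc less_imp_le)
    define p where "p = ca_px r X Y"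
    have "r / (r + 1) \<le> p" using ca_px_ge[OF r0] \<open>Y < X\<close> by (simp add: p_def)
    moreover have "r / (r + 1) = 1 / (1 + \<tau>)" using r0 by (simp add: \<tau>_def field_simps)
    ultimately have "1 / (1 + \<tau>) * (1 + \<tau>) \<le> p * (1 + \<tau>)" using \<tau> by (intro mult_right_mono) auto
    then have "1 \<le> p * (1 + \<tau>)" using \<tau> by simp
    then have "0 \<le> \<tau> ^ e * (1 - \<tau>) * (p * (1 + \<tau>) - 1)" using \<tau> by simp
    then have "1 - \<tau> ^ (e + 1) \<le> p * (1 - \<tau> ^ (e + 2)) + (1 - p) * (1 - \<tau> ^ e)"
      unfolding one_minus_power_step by simp
    then show "1 - \<tau> ^ (X - Y) \<le> ca_px r X Y * (1 - \<tau> ^ (Suc X - Y))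
        + (1 - ca_px r X Y) * (if Suc Y = X then 0 else 1 - \<tau> ^ (X - Suc Y))"
      using e by (cases "Suc Y = X") (auto simp: p_def Suc_diff_le)
  qed (use \<tau> in simp)
  then show ?thesis unfolding \<tau>_def by (rule ca_q_ge[OF r0])
qed

lemma ca_q_diag_ge:
  assumes r: "1 < r" and "0 < x"
  shows "(r - 1) / (r + 1) \<le> ca_q r x x"
proof -
  have r0: "0 < r" using r by simp
  have "r * (1 - 1 / r) = r - 1" using r0 by (simp add: right_diff_distrib)
  then have "(r - 1) / (r + 1) = r / (r + 1) * (1 - (1 / r) ^ (Suc x - x))" by simp
  also have "\<dots> \<le> r / (r + 1) * ca_q r (Suc x) x"
    using ca_q_above_diag_ge[OF r, of x "Suc x"] r0 by (intro mult_left_mono) auto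
  also have "\<dots> \<le> ca_q r x x"
    using ca_q_diag[OF r0 \<open>0 < x\<close>] ca_q_nonneg[OF r0, of x "Suc x"] r0 by simp
  finally show ?thesis .
qed

text \<open>The probability that a random walk on the integers, stepping up with probability
  \<open>1 / (1 + \<rho>)\<close> and down otherwise, started at \<open>d\<close> reaches \<open>K\<close> before \<open>0\<close>.\<close>

definition gambler_success :: "real \<Rightarrow> nat \<Rightarrow> nat \<Rightarrow> real" where
  "gambler_success \<rho> K d = (1 - \<rho> ^ d) / (1 - \<rho> ^ K)"

lemma gambler_success_nonneg: "0 \<le> \<rho> \<Longrightarrow> 0 \<le> gambler_success \<rho> K d"
  unfolding gambler_success_def
  by (cases "\<rho> \<le> 1")
    (auto intro!: divide_nonneg_nonneg divide_nonpos_nonpos simp: power_le_one one_le_power)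

lemma gambler_success_ge_one:
  assumes "0 < \<rho>" "\<rho> \<noteq> 1" "0 < K" "K \<le> d"
  shows "1 \<le> gambler_success \<rho> K d"
proof (cases "\<rho> < 1")
  case True
  then have "\<rho> ^ K < 1" "\<rho> ^ d \<le> \<rho> ^ K" using assms by (simp_all add: power_less_one_iff power_decreasing)
  then show ?thesis by (simp add: gambler_success_def)
next
  case False
  then have "1 < \<rho> ^ K" "\<rho> ^ K \<le> \<rho> ^ d" using assms by (simp_all add: one_less_power power_increasing)
  then show ?thesis by (simp add: gambler_success_def le_divide_eq)
qed

lemma gambler_success_step:
  assumes "0 \<le> \<rho>" "p \<le> 1 / (1 + \<rho>)"
  shows "p * gambler_success \<rho> K (e + 2) + (1 - p) * gambler_success \<rho> K e \<le> gambler_success \<rho> K (e + 1)"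
proof -
  define D where "D = 1 - \<rho> ^ K"
  have "p * gambler_success \<rho> K (e + 2) + (1 - p) * gambler_success \<rho> K e
      = (p * (1 - \<rho> ^ (e + 2)) + (1 - p) * (1 - \<rho> ^ e)) / D"
    by (simp add: gambler_success_def D_def add_divide_distrib)
  also have "\<dots> = (1 - \<rho> ^ (e + 1)) / D + \<rho> ^ e * ((1 - \<rho>) / D) * (p * (1 + \<rho>) - 1)"
    by (simp only: one_minus_power_step add_divide_distrib) simp
  also have "\<dots> = gambler_success \<rho> K (e + 1) + \<rho> ^ e * gambler_success \<rho> K 1 * (p * (1 + \<rho>) - 1)"
    by (simp add: gambler_success_def D_def)
  finally have "p * gambler_success \<rho> K (e + 2) + (1 - p) * gambler_success \<rho> K e
      = gambler_success \<rho> K (e + 1) + \<rho> ^ e * gambler_success \<rho> K 1 * (p * (1 + \<rho>) - 1)" .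
  moreover have "p * (1 + \<rho>) \<le> 1" using assms by (simp add: le_divide_eq)
  ultimately show ?thesis
    using gambler_success_nonneg[OF assms(1), of K 1] assms(1) by (simp add: mult_nonneg_nonpos)
qed

lemma gambler_success_tendsto:
  assumes "(f \<longlongrightarrow> \<rho>) F" "\<rho> ^ K \<noteq> 1"
  shows "((\<lambda>x. gambler_success (f x) K d) \<longlongrightarrow> gambler_success \<rho> K d) F"
  unfolding gambler_success_def using assms by (intro tendsto_intros) auto

lemma gambler_success_tendsto_subcritical:
  assumes "0 \<le> \<rho>" "\<rho> < 1"
  shows "(\<lambda>K. gambler_success \<rho> K d) \<longlonglongrightarrow> 1 - \<rho> ^ d"
proof -
  have "(\<lambda>K. (1 - \<rho> ^ d) / (1 - \<rho> ^ K)) \<longlonglongrightarrow> (1 - \<rho> ^ d) / (1 - 0)"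
    using assms by (intro tendsto_intros LIMSEQ_power_zero) auto
  then show ?thesis by (simp add: gambler_success_def)
qed

lemma gambler_success_tendsto_supercritical:
  assumes "1 < \<rho>"
  shows "(\<lambda>K. gambler_success \<rho> K d) \<longlonglongrightarrow> 0"
proof -
  have "gambler_success \<rho> K d = (1 - \<rho> ^ d) * (1 / \<rho>) ^ K / ((1 / \<rho>) ^ K - 1)" for K
  proof -
    have "(1 - \<rho> ^ K) * (1 / \<rho>) ^ K = (1 / \<rho>) ^ K - 1"
      using assms by (simp add: power_one_over field_simps)
    moreover have "(1 / \<rho>) ^ K \<noteq> 0" using assms by simp
    ultimately show ?thesis
      unfolding gambler_success_def by (metis mult_divide_mult_cancel_right)
  qed
  moreover have "(\<lambda>K. (1 - \<rho> ^ d) * (1 / \<rho>) ^ K / ((1 / \<rho>) ^ K - 1)) \<longlonglongrightarrow> (1 - \<rho> ^ d) * 0 / (0 - 1)"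
    using assms by (intro tendsto_intros LIMSEQ_power_zero) auto
  ultimately show ?thesis by simp
qed

lemma exponential_drift:
  fixes p w :: real
  assumes "0 < w" "0 \<le> (p - w) * (2 * w - 1)"
  shows "p * (1 / (2 * w)) + (1 - p) / (1 / (2 * w)) \<le> 1 / 2 + 2 * w * (1 - w)"
proof -
  have "p * (1 / (2 * w)) + (1 - p) / (1 / (2 * w)) - (1 / 2 + 2 * w * (1 - w))
      = - ((p - w) * (2 * w - 1)) * ((2 * w + 1) / (2 * w))"
    using assms(1) by (simp add: field_simps)
  also have "\<dots> \<le> 0" using assms by (intro mult_nonpos_nonneg) auto
  finally show ?thesis by simp
qed

lemma one_le_power_weight:
  fixes \<beta> :: real
  assumes "0 < \<beta>" "d \<le> K"
  shows "1 \<le> (1 + (1 / \<beta>) ^ K) * \<beta> ^ d"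
proof (cases "1 \<le> \<beta>")
  case True
  then show ?thesis using assms(1) by (simp add: distrib_right one_le_power add_increasing2)
next
  case False
  then have "(1 / \<beta>) ^ K * \<beta> ^ K \<le> (1 / \<beta>) ^ K * \<beta> ^ d"
    using assms by (intro mult_left_mono power_decreasing) auto
  moreover have "(1 / \<beta>) ^ K * \<beta> ^ K = 1" using assms by (simp add: power_one_over)
  ultimately show ?thesis using assms(1) by (simp add: distrib_right add_increasing)
qed

lemma ruin_and_drift_step:
  fixes p \<rho> \<beta> \<theta> c :: real
  assumes "0 \<le> p" "p \<le> 1" "0 < \<rho>" "p \<le> 1 / (1 + \<rho>)" "0 < \<beta>" "p * \<beta> + (1 - p) / \<beta> \<le> \<theta>" "0 \<le> c"
  shows "p * (gambler_success \<rho> K (e + 2) + c * \<beta> ^ (e + 2)) + (1 - p) * (gambler_success \<rho> K e + c * \<beta> ^ e)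
    \<le> gambler_success \<rho> K (e + 1) + c * (\<theta> * \<beta> ^ (e + 1))"
proof -
  have "p * \<beta> ^ (e + 2) + (1 - p) * \<beta> ^ e = (p * \<beta> + (1 - p) / \<beta>) * \<beta> ^ (e + 1)"
    using assms(5) by (simp add: field_simps power_add power2_eq_square)
  also have "\<dots> \<le> \<theta> * \<beta> ^ (e + 1)"
    using assms(5,6) by (intro mult_right_mono) simp_all
  finally have "c * (p * \<beta> ^ (e + 2) + (1 - p) * \<beta> ^ e) \<le> c * (\<theta> * \<beta> ^ (e + 1))"
    using assms(7) by (rule mult_left_mono)
  moreover have "p * gambler_success \<rho> K (e + 2) + (1 - p) * gambler_success \<rho> K e
      \<le> gambler_success \<rho> K (e + 1)"
    using assms(3,4) by (intro gambler_success_step) simp_all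
  ultimately show ?thesis by (simp add: algebra_simps)
qed

text \<open>To avoid the diagonal for \<open>n\<close> steps, \<open>X - Y\<close> must either leave the strip \<open>0 < X - Y < K\<close>
  through its top, which gambler's ruin controls, or stay inside for all \<open>n\<close> steps; by the
  drift hypothesis \<open>\<beta>\<^bsup>X - Y\<^esup> / \<theta>\<^sup>n\<close> is a supermartingale in the strip, which bounds the latter by the
  second summand.\<close>

lemma ca_avoid_le_strip:
  fixes r \<rho> \<beta> \<theta> :: real and K lo :: nat
  assumes r: "0 < r" and \<rho>: "0 < \<rho>" "\<rho> \<noteq> 1" and K: "0 < K" and \<beta>: "0 < \<beta>" and \<theta>: "0 \<le> \<theta>"
    and gambler: "\<And>X Y. lo \<le> X \<Longrightarrow> Y < X \<Longrightarrow> X - Y < K \<Longrightarrow> ca_px r X Y \<le> 1 / (1 + \<rho>)"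
    and drift: "\<And>X Y. lo \<le> X \<Longrightarrow> Y < X \<Longrightarrow> X - Y < K \<Longrightarrow>
      ca_px r X Y * \<beta> + (1 - ca_px r X Y) / \<beta> \<le> \<theta>"
    and "lo \<le> X" "Y < X"
  shows "ca_avoid r n X Y \<le> gambler_success \<rho> K (X - Y) + (1 + (1 / \<beta>) ^ K) * \<theta> ^ n * \<beta> ^ (X - Y)"
proof -
  define c where "c = 1 + (1 / \<beta>) ^ K"
  have c: "0 \<le> c" using \<beta> by (simp add: c_def)
  define g where "g n X Y = gambler_success \<rho> K (X - Y) + c * \<theta> ^ n * \<beta> ^ (X - Y)" for n X Y :: nat
  have g_ge_one: "1 \<le> g n X Y" if "K \<le> X - Y" for n X Y
    using gambler_success_ge_one[OF \<rho> K that] c \<theta> \<beta> unfolding g_def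
    by (intro add_increasing2 mult_nonneg_nonneg) simp_all
  have "ca_avoid r n X Y \<le> g n X Y"
  proof (rule ca_avoid_le_supersolution[OF r _ _ \<open>lo \<le> X\<close> \<open>Y < X\<close>])
    fix X Y :: nat
    show "1 \<le> g 0 X Y"
    proof (cases "K \<le> X - Y")
      case False
      then show ?thesis using one_le_power_weight[OF \<beta>, of "X - Y" K] gambler_success_nonneg[of \<rho> K "X - Y"] \<rho>
        by (simp add: g_def c_def)
    qed (rule g_ge_one)
  next
    fix n X Y :: nat
    assume XY: "lo \<le> X" "Y < X"
    show "1 \<le> g (Suc n) X Y \<or> ca_px r X Y * g n (Suc X) Y
        + (1 - ca_px r X Y) * (if Suc Y = X then 0 else g n X (Suc Y)) \<le> g (Suc n) X Y"
    proof (cases "K \<le> X - Y")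
      case False
      obtain e where e: "X - Y = Suc e" "Suc X - Y = e + 2" "X - Suc Y = e"
        using XY by (metis Suc_diff_Suc Suc_diff_le add_2_eq_Suc' diff_Suc_Suc less_imp_le)
      define p where "p = ca_px r X Y"
      have p: "0 \<le> p" "p \<le> 1" using ca_px_nonneg[OF r] ca_px_le_one[OF r] by (simp_all add: p_def)
      have "(if Suc Y = X then 0 else g n X (Suc Y)) \<le> g n X (Suc Y)"
        using gambler_success_nonneg[of \<rho> K] \<rho> c \<theta> \<beta> by (simp add: g_def)
      then have "p * g n (Suc X) Y + (1 - p) * (if Suc Y = X then 0 else g n X (Suc Y))
          \<le> p * g n (Suc X) Y + (1 - p) * g n X (Suc Y)"
        using p by (intro add_left_mono mult_left_mono) simp_all
      also have "\<dots> \<le> g (Suc n) X Y"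
      proof -
        have "p * (gambler_success \<rho> K (e + 2) + c * \<theta> ^ n * \<beta> ^ (e + 2))
            + (1 - p) * (gambler_success \<rho> K e + c * \<theta> ^ n * \<beta> ^ e)
            \<le> gambler_success \<rho> K (e + 1) + c * \<theta> ^ n * (\<theta> * \<beta> ^ (e + 1))"
          using gambler[OF XY] drift[OF XY] False c \<theta>
          by (intro ruin_and_drift_step[OF p \<rho>(1) _ \<beta>]) (simp_all add: p_def)
        then show ?thesis by (simp add: g_def e mult_ac)
      qed
      finally show ?thesis by (simp add: p_def)
    qed (simp add: g_ge_one)
  qed
  then show ?thesis by (simp add: g_def c_def)
qed

lemma ca_q_le_gambler_success:
  fixes r \<rho> w :: real and K lo :: nat
  assumes r: "0 < r" and \<rho>: "0 < \<rho>" "\<rho> \<noteq> 1" and K: "0 < K" and w: "0 < w" "w < 1" "w \<noteq> 1 / 2"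
    and strip: "\<And>X Y. lo \<le> X \<Longrightarrow> Y < X \<Longrightarrow> X - Y < K \<Longrightarrow>
      ca_px r X Y \<le> 1 / (1 + \<rho>) \<and> 0 \<le> (ca_px r X Y - w) * (2 * w - 1)"
    and "lo \<le> X" "Y < X"
  shows "ca_q r X Y \<le> gambler_success \<rho> K (X - Y)"
proof -
  define \<beta> where "\<beta> = 1 / (2 * w)"
  define \<theta> where "\<theta> = 1 / 2 + 2 * w * (1 - w)"
  have \<theta>: "0 \<le> \<theta>" "\<theta> < 1"
  proof -
    have "0 < (2 * w - 1)\<^sup>2" using w by simp
    then show "\<theta> < 1" by (simp add: \<theta>_def power2_eq_square algebra_simps)
    show "0 \<le> \<theta>" using w by (simp add: \<theta>_def)
  qed
  have "ca_avoid r n X Y \<le> gambler_success \<rho> K (X - Y) + (1 + (1 / \<beta>) ^ K) * \<theta> ^ n * \<beta> ^ (X - Y)" for n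
  proof (rule ca_avoid_le_strip[OF r \<rho> K _ \<theta>(1) _ _ \<open>lo \<le> X\<close> \<open>Y < X\<close>])
    show "0 < \<beta>" using w by (simp add: \<beta>_def)
    fix X Y assume XY: "lo \<le> X" "Y < X" "X - Y < K"
    show "ca_px r X Y \<le> 1 / (1 + \<rho>)" using strip[OF XY] ..
    show "ca_px r X Y * \<beta> + (1 - ca_px r X Y) / \<beta> \<le> \<theta>"
      unfolding \<beta>_def \<theta>_def using strip[OF XY] w by (intro exponential_drift) auto
  qed
  moreover have "(\<lambda>n. gambler_success \<rho> K (X - Y) + (1 + (1 / \<beta>) ^ K) * \<theta> ^ n * \<beta> ^ (X - Y))
      \<longlonglongrightarrow> gambler_success \<rho> K (X - Y) + (1 + (1 / \<beta>) ^ K) * 0 * \<beta> ^ (X - Y)"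
    using \<theta> by (intro tendsto_intros LIMSEQ_power_zero) simp
  ultimately show ?thesis by (intro ca_q_le_limit[OF r]) simp_all
qed

lemma near_diagonal_ratio:
  fixes x X Y K :: nat
  assumes "Suc x \<le> X" "Y < X" "X - Y < K"
  shows "(1 - real K / (real x + 1)) * real X \<le> real Y"
proof -
  have "real K \<le> real K * real X / (real x + 1)"
    using assms(1) by (simp add: le_divide_eq mult_left_mono)
  moreover have "real X \<le> real Y + real K" using assms(2,3) by linarith
  ultimately show ?thesis by (simp add: left_diff_distrib)
qed

definition diag_escape_bound :: "real \<Rightarrow> real \<Rightarrow> nat \<Rightarrow> real" where
  "diag_escape_bound r \<gamma> K =
     r / (r + 1) * gambler_success (\<gamma> / r) K 1 + 1 / (r + 1) * gambler_success (r * \<gamma>) K 1"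

lemma ca_q_diag_le:
  fixes r \<gamma> :: real and K x :: nat
  assumes r: "1 < r" and K: "0 < K" and x: "0 < x" and \<gamma>: "1 / r < \<gamma>" "\<gamma> \<le> 1"
    and near: "\<And>X Y. Suc x \<le> X \<Longrightarrow> Y < X \<Longrightarrow> X - Y < K \<Longrightarrow> \<gamma> * real X \<le> real Y"
  shows "ca_q r x x \<le> diag_escape_bound r \<gamma> K"
proof -
  have r0: "0 < r" using r by simp
  have \<gamma>0: "0 < \<gamma>" using \<gamma> r0 by (smt (verit) divide_pos_pos)
  have r\<gamma>: "1 < r * \<gamma>" using \<gamma>(1) r0 by (simp add: divide_less_eq mult.commute)
  have above: "ca_q r (Suc x) x \<le> gambler_success (\<gamma> / r) K (Suc x - x)"
  proof (rule ca_q_le_gambler_success[where w = "r / (r + 1)" and lo = "Suc x"])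
    show "0 < r" "0 < \<gamma> / r" "\<gamma> / r \<noteq> 1" "0 < K" "0 < r / (r + 1)" "r / (r + 1) < 1"
      "r / (r + 1) \<noteq> 1 / 2" "Suc x \<le> Suc x" "x < Suc x"
      using r \<gamma> \<gamma>0 K by (auto simp: field_simps)
    fix X Y assume XY: "Suc x \<le> X" "Y < X" "X - Y < K"
    have "r * (\<gamma> / r) * real X \<le> real Y" using near[OF XY] r0 by simp
    then have "ca_px r X Y \<le> 1 / (1 + \<gamma> / r)" using r0 \<gamma>0 by (intro ca_px_le) auto
    moreover have "r / (r + 1) \<le> ca_px r X Y" using XY r0 by (intro ca_px_ge) auto
    moreover have "0 < 2 * (r / (r + 1)) - 1" using r by (simp add: field_simps)
    ultimately show "ca_px r X Y \<le> 1 / (1 + \<gamma> / r)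
        \<and> 0 \<le> (ca_px r X Y - r / (r + 1)) * (2 * (r / (r + 1)) - 1)"
      by simp
  qed
  have below: "ca_q (1 / r) (Suc x) x \<le> gambler_success (r * \<gamma>) K (Suc x - x)"
  proof (rule ca_q_le_gambler_success[where w = "1 / (1 + r * \<gamma>)" and lo = "Suc x"])
    show "0 < 1 / r" "0 < r * \<gamma>" "r * \<gamma> \<noteq> 1" "0 < K" "0 < 1 / (1 + r * \<gamma>)"
      "1 / (1 + r * \<gamma>) < 1" "1 / (1 + r * \<gamma>) \<noteq> 1 / 2" "Suc x \<le> Suc x" "x < Suc x"
      using r\<gamma> r0 K by (auto simp: field_simps)
    fix X Y assume XY: "Suc x \<le> X" "Y < X" "X - Y < K"
    have "1 / r * (r * \<gamma>) * real X \<le> real Y" using near[OF XY] r0 by simp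
    then have "ca_px (1 / r) X Y \<le> 1 / (1 + r * \<gamma>)" using r0 r\<gamma> by (intro ca_px_le) auto
    moreover have "2 * (1 / (1 + r * \<gamma>)) - 1 < 0" using r\<gamma> by (simp add: field_simps)
    ultimately show "ca_px (1 / r) X Y \<le> 1 / (1 + r * \<gamma>)
        \<and> 0 \<le> (ca_px (1 / r) X Y - 1 / (1 + r * \<gamma>)) * (2 * (1 / (1 + r * \<gamma>)) - 1)"
      by (simp add: mult_nonpos_nonpos)
  qed
  have "r / (r + 1) * ca_q r (Suc x) x + 1 / (r + 1) * ca_q (1 / r) (Suc x) x \<le> diag_escape_bound r \<gamma> K"
    unfolding diag_escape_bound_def using above below r0 by (intro add_mono mult_left_mono) simp_all
  then show ?thesis
    using ca_q_diag[OF r0 x] ca_q_swap[OF r0, of x "Suc x"] by simp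
qed

lemma diag_escape_bound_tendsto_width:
  assumes "1 < r"
  shows "(\<lambda>K. diag_escape_bound r 1 K) \<longlonglongrightarrow> (r - 1) / (r + 1)"
proof -
  have "(\<lambda>K. diag_escape_bound r 1 K) \<longlonglongrightarrow> r / (r + 1) * (1 - (1 / r) ^ 1) + 1 / (r + 1) * 0"
    unfolding diag_escape_bound_def
    using assms gambler_success_tendsto_subcritical[of "1 / r" 1] gambler_success_tendsto_supercritical[of r 1]
    by (intro tendsto_add tendsto_mult tendsto_const) simp_all
  moreover have "r * (1 - 1 / r) = r - 1" using assms by (simp add: right_diff_distrib)
  ultimately show ?thesis by simp
qed

lemma ca_q_diag_eventually_less:
  fixes r a :: real and K :: nat
  assumes r: "1 < r" and K: "0 < K" and a: "diag_escape_bound r 1 K < a"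
  shows "\<forall>\<^sub>F x in sequentially. ca_q r x x < a"
proof -
  define \<gamma> where "\<gamma> x = 1 - real K / (real x + 1)" for x :: nat
  have "(\<lambda>x. real K * inverse (real (Suc x))) \<longlonglongrightarrow> real K * 0"
    by (intro tendsto_intros LIMSEQ_inverse_real_of_nat)
  then have \<gamma>_lim: "\<gamma> \<longlonglongrightarrow> 1 - 0"
    unfolding \<gamma>_def by (intro tendsto_intros) (simp add: divide_inverse add.commute)
  have "(1 / r) ^ K < 1" using r K by (simp add: power_less_one_iff)
  moreover have "1 < r ^ K" using r K by (intro one_less_power)
  ultimately have "(\<lambda>x. diag_escape_bound r (\<gamma> x) K) \<longlonglongrightarrow> diag_escape_bound r 1 K"
    unfolding diag_escape_bound_def using \<gamma>_lim by (intro tendsto_intros gambler_success_tendsto) auto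
  then have "\<forall>\<^sub>F x in sequentially. diag_escape_bound r (\<gamma> x) K < a"
    using a by (rule order_tendstoD)
  moreover have "\<forall>\<^sub>F x in sequentially. 1 / r < \<gamma> x"
    using \<gamma>_lim r by (intro order_tendstoD) auto
  ultimately show ?thesis
    using eventually_gt_at_top[of 0]
  proof eventually_elim
    case (elim x)
    have "ca_q r x x \<le> diag_escape_bound r (\<gamma> x) K"
      using r K elim(2,3) near_diagonal_ratio[of x] by (intro ca_q_diag_le) (auto simp: \<gamma>_def)
    then show ?case using elim(1) by simp
  qed
qed

theorem lemma3:
  fixes r :: real
  assumes "r > 1"
  shows "((\<lambda>x::nat. ca_q r x x) \<longlongrightarrow> (r - 1) / (r + 1)) sequentially"
proof (rule order_tendstoI)
  fix a assume a: "a < (r - 1) / (r + 1)"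
  show "\<forall>\<^sub>F x in sequentially. a < ca_q r x x"
    using eventually_gt_at_top[of 0]
    by (rule eventually_mono) (rule less_le_trans[OF a ca_q_diag_ge[OF assms]])
next
  fix a assume a: "(r - 1) / (r + 1) < a"
  have "\<forall>\<^sub>F K in sequentially. diag_escape_bound r 1 K < a \<and> 0 < K"
    using order_tendstoD(2)[OF diag_escape_bound_tendsto_width[OF assms] a] eventually_gt_at_top[of 0]
    by (rule eventually_conj)
  then obtain K where "diag_escape_bound r 1 K < a" "0 < K"
    using eventually_happens'[OF sequentially_bot] by blast
  then show "\<forall>\<^sub>F x in sequentially. ca_q r x x < a"
    using ca_q_diag_eventually_less[OF assms] by blast
qed

end
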